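(* Let $\mathcal{C}\in(\mathbb{R}^I)^{\otimes d}$ be symmetric and let $\mathcal{M}\subset(\mathbb{R}^I)^{\otimes(d-1)}$ be a finite set of symmetric decomposable tensors. Then $$\operatorname{srk}\operatorname{SAdj}(\mathcal{C},\mathcal{M})\le\operatorname{minsrk}(\mathcal{C}\bmod\mathcal{M})+d\dim\operatorname{Span}\mathcal{M}.$$
   Context: All tensors are real; symmetric rank $\operatorname{srk}$ is the minimal number of summands $\lambda v^{\otimes d}$. Symmetric adjoining: let $\mathcal{M}$ be indexed by a finite set $W$ disjoint from $I$, with $\mathcal{M}^{(w)}$ the element indexed by $w$. $\operatorname{SAdj}(\mathcal{C},\mathcal{M})\in(\mathbb{R}^{I\cup W})^{\otimes d}$ is the tensor $\mathcal{T}$ with $\mathcal{T}(k_1|\dots|k_d)=\mathcal{C}(k_1|\dots|k_d)$ if all $k_i\in I$; $\mathcal{T}(k_1|\dots|k_{j-1}|w|k_{j+1}|\dots|k_d)=\mathcal{M}^{(w)}(k_1|\dots|k_{j-1}|k_{j+1}|\dots|k_d)$ if $w\in W$ is in position $j$ and all other $k_h\in I$; and all other entries (two or more indices in $W$) equal $0$. $\mathcal{C}\bmod\mathcal{M}$ is the set of tensors with entries $\mathcal{C}(k_1|\dots|k_d)+\sum_{j=1}^d M_j^{(k_j)}(k_1|\dots|\widehat{k_j}|\dots|k_d)$ with arbitrary $M_j^{(k_j)}\in\operatorname{Span}\mathcal{M}$ chosen independently for each $j$ and each $k_j\in I$. $\operatorname{minsrk}\mathcal{A}$ is the minimal symmetric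 rank of a symmetric tensor in $\mathcal{A}$. *)

theory Defs
  imports "HOL-Analysis.Analysis" "HOL-Library.Function_Algebras" "HOL-Library.Extended_Nat"
begin

text \<open>Real tensors of order d indexed by a finite set A are represented as functions
  on lists of indices; only lists in tdom d A (length d, entries in A) matter.\<close>

definition tdom :: "nat \<Rightarrow> 'a set \<Rightarrow> 'a list set" where
  "tdom d A = {ks. length ks = d \<and> set ks \<subseteq> A}"

definition del_nth :: "nat \<Rightarrow> 'a list \<Rightarrow> 'a list" where
  "del_nth j ks = take j ks @ drop (Suc j) ks"

definition tsym :: "nat \<Rightarrow> 'a set \<Rightarrow> ('a list \<Rightarrow> real) \<Rightarrow> bool" where
  "tsym d A T \<longleftrightarrow> (\<forall>ks\<in>tdom d A. \<forall>ks'\<in>tdom d A. mset ks = mset ks' \<longrightarrow> T ks = T ks')"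

text \<open>Symmetric rank: minimal number of summands lambda v^{tensor d} (infinity if none).\<close>
definition srk :: "nat \<Rightarrow> 'a set \<Rightarrow> ('a list \<Rightarrow> real) \<Rightarrow> enat" where
  "srk d A T = Inf {enat r | r. \<exists>(lam :: nat \<Rightarrow> real) (v :: nat \<Rightarrow> 'a \<Rightarrow> real).
      \<forall>ks\<in>tdom d A. T ks = (\<Sum>i<r. lam i * (\<Prod>j<d. v i (ks ! j)))}"

definition sym_decomposable :: "nat \<Rightarrow> 'a set \<Rightarrow> ('a list \<Rightarrow> real) \<Rightarrow> bool" where
  "sym_decomposable d A T \<longleftrightarrow> (\<exists>(lam :: real) (v :: 'a \<Rightarrow> real).
      \<forall>ks\<in>tdom d A. T ks = lam * (\<Prod>j<d. v (ks ! j)))"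

definition trestrict :: "nat \<Rightarrow> 'a set \<Rightarrow> ('a list \<Rightarrow> real) \<Rightarrow> ('a list \<Rightarrow> real)" where
  "trestrict d A T = (\<lambda>ks. if ks \<in> tdom d A then T ks else 0)"

definition tscale :: "real \<Rightarrow> ('a list \<Rightarrow> real) \<Rightarrow> ('a list \<Rightarrow> real)" where
  "tscale c T = (\<lambda>ks. c * T ks)"

definition tspan :: "('a list \<Rightarrow> real) set \<Rightarrow> ('a list \<Rightarrow> real) set" where
  "tspan S = module.span tscale S"

definition tdim :: "('a list \<Rightarrow> real) set \<Rightarrow> nat" where
  "tdim S = vector_space.dim tscale S"

definition SpanM :: "nat \<Rightarrow> 'a set \<Rightarrow> 'a set \<Rightarrow> ('a \<Rightarrow> 'a list \<Rightarrow> real) \<Rightarrow> ('a list \<Rightarrow> real) set" where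
  "SpanM d I W M = tspan ((\<lambda>w. trestrict (d - 1) I (M w)) ` W)"

definition SAdj :: "nat \<Rightarrow> 'a set \<Rightarrow> 'a set \<Rightarrow> ('a list \<Rightarrow> real) \<Rightarrow> ('a \<Rightarrow> 'a list \<Rightarrow> real)
    \<Rightarrow> ('a list \<Rightarrow> real)" where
  "SAdj d I W C M = (\<lambda>ks.
     if set ks \<subseteq> I then C ks
     else if (\<exists>j<length ks. ks ! j \<in> W \<and> set (del_nth j ks) \<subseteq> I) then
       (let j = (THE j. j < length ks \<and> ks ! j \<in> W \<and> set (del_nth j ks) \<subseteq> I)
        in M (ks ! j) (del_nth j ks))
     else 0)"

definition Cmod :: "nat \<Rightarrow> 'a set \<Rightarrow> 'a set \<Rightarrow> ('a list \<Rightarrow> real) \<Rightarrow> ('a \<Rightarrow> 'a list \<Rightarrow> real)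
    \<Rightarrow> ('a list \<Rightarrow> real) set" where
  "Cmod d I W C M = {T. \<exists>Mf :: nat \<Rightarrow> 'a \<Rightarrow> ('a list \<Rightarrow> real).
      (\<forall>j<d. \<forall>k\<in>I. Mf j k \<in> SpanM d I W M) \<and>
      (\<forall>ks\<in>tdom d I. T ks = C ks + (\<Sum>j<d. Mf j (ks ! j) (del_nth j ks)))}"

definition minsrk :: "nat \<Rightarrow> 'a set \<Rightarrow> ('a list \<Rightarrow> real) set \<Rightarrow> enat" where
  "minsrk d A S = Inf {srk d A T | T. T \<in> S \<and> tsym d A T}"

end

theory Submission
  imports Defs "HOL-Computational_Algebra.Polynomial"
begin

text \<open>
  Take a symmetric \<open>T\<close> in \<open>C mod M\<close> of minimal symmetric rank \<open>r\<close>, and choose among the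
  tensors of \<open>M\<close> a basis \<open>u_1^{\<otimes>(d-1)}, \<dots>, u_s^{\<otimes>(d-1)}\<close> of \<open>Span M\<close> (scalars absorbed).
  Averaging the defining identity of \<open>T\<close> over the cyclic shifts of the index, the symmetry of
  \<open>T\<close> and \<open>C\<close> gives \<open>T - C = \<Sum>_t \<Sum>_i b_t(k_i) u_t^{\<otimes>(d-1)}(k without k_i)\<close>.
  Extend \<open>T\<close> and the \<open>u_t\<close> by zero to \<open>I \<union> W\<close>, and let \<open>y_t\<close> be \<open>-b_t\<close> on \<open>I\<close> and the \<open>t\<close>-th
  coordinate of \<open>M^(w)\<close> at \<open>w \<in> W\<close>; then
  \<open>SAdj(C, M) = T + \<Sum>_t \<Sum>_i y_t(k_i) u_t^{\<otimes>(d-1)}(k without k_i)\<close>.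
  Each polarized summand is the coefficient of \<open>a^(d-1)\<close> in \<open>(a u_t + y_t)^{\<otimes>d}\<close>, a polynomial
  of degree \<open>d\<close> in \<open>a\<close>; a quadrature rule with \<open>d\<close> nodes symmetric about \<open>0\<close> recovers that
  coefficient exactly, so each summand is a combination of \<open>d\<close> symmetric powers, and
  \<open>srk SAdj(C, M) \<le> r + d s\<close>.
\<close>

section \<open>A quadrature rule for the next-to-leading coefficient\<close>

lemma coeff_pred_eq_lagrange_sum:
  fixes a :: "nat \<Rightarrow> real" and f :: "real poly"
  assumes n: "n \<ge> 1" and inj: "inj_on a {..<n}" and deg: "degree f < n"
  shows "coeff f (n - 1) = (\<Sum>q<n. poly f (a q) / (\<Prod>p\<in>{..<n}-{q}. a q - a p))"
proof -
  define L where "L q = (\<Prod>p\<in>{..<n}-{q}. [:- a p, 1:])" for q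
  define w where "w q = (\<Prod>p\<in>{..<n}-{q}. a q - a p)" for q
  have deg_L: "degree (L q) = n - 1" and lead_L: "coeff (L q) (n - 1) = 1" if "q < n" for q
  proof -
    show "degree (L q) = n - 1"
      unfolding L_def using that by (subst degree_prod_eq_sum_degree) auto
    moreover have "lead_coeff (L q) = 1"
      unfolding L_def by (simp add: lead_coeff_prod)
    ultimately show "coeff (L q) (n - 1) = 1" by simp
  qed
  have L_node: "poly (L q) (a r) = (if r = q then w q else 0)" if "q < n" "r < n" for q r
    using that by (auto simp: L_def w_def poly_prod intro: prod_zero)
  have w_nonzero: "w q \<noteq> 0" if "q < n" for q
    using inj that by (auto simp: w_def inj_on_def)
  define g where "g = (\<Sum>q<n. smult (poly f (a q) / w q) (L q))"
  have "poly g (a r) = poly f (a r)" if "r < n" for r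
    using that w_nonzero by (simp add: g_def poly_sum L_node if_distrib cong: if_cong)
  moreover have "degree g < n"
  proof -
    have "degree g \<le> n - 1"
      unfolding g_def by (rule degree_sum_le) (auto intro: order.trans[OF degree_smult_le] simp: deg_L)
    then show ?thesis using n by simp
  qed
  ultimately have "f = g"
    using deg inj by (intro poly_eqI_degree[where A = "a ` {..<n}"]) (auto simp: card_image)
  then have "coeff f (n - 1) = coeff g (n - 1)"
    by simp
  also have "\<dots> = (\<Sum>q<n. poly f (a q) / w q * coeff (L q) (n - 1))"
    by (simp add: g_def coeff_sum)
  also have "\<dots> = (\<Sum>q<n. poly f (a q) / (\<Prod>p\<in>{..<n}-{q}. a q - a p))"
    by (intro sum.cong) (simp_all add: lead_L[simplified] w_def)
  finally show ?thesis .
qed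

lemma coeff_prod_linear_factors:
  fixes a :: "nat \<Rightarrow> real"
  shows "coeff (\<Prod>q<Suc n. [:- a q, 1:]) n = - (\<Sum>q<Suc n. a q)"
proof (induction n)
  case (Suc n)
  let ?P = "\<Prod>q<Suc n. [:- a q, 1:]"
  have "degree ?P = Suc n"
    by (subst degree_prod_eq_sum_degree) auto
  moreover have "lead_coeff ?P = 1"
    by (subst lead_coeff_prod) simp
  ultimately have "coeff ?P (Suc n) = 1" by metis
  then show ?case
    using Suc by (simp add: prod.lessThan_Suc[of _ "Suc n"] algebra_simps)
qed simp

lemma coeff_pred_quadrature:
  assumes n: "n \<ge> 1"
  obtains c a :: "nat \<Rightarrow> real"
  where "\<And>f. degree f \<le> n \<Longrightarrow> coeff f (n - 1) = (\<Sum>q<n. c q * poly f (a q))"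
proof -
  define a :: "nat \<Rightarrow> real" where "a q = 2 * real q - real n + 1" for q
  define c where "c q = 1 / (\<Prod>p\<in>{..<n}-{q}. a q - a p)" for q
  have inj: "inj_on a {..<n}"
    by (auto simp: inj_on_def a_def)
  have lagrange: "coeff g (n - 1) = (\<Sum>q<n. c q * poly g (a q))" if "degree g < n" for g
    using coeff_pred_eq_lagrange_sum[OF n inj that] by (simp add: c_def)
  define P where "P = (\<Prod>q<n. [:- a q, 1:])"
  have deg_P: "degree P = n"
    unfolding P_def by (subst degree_prod_eq_sum_degree) auto
  have "lead_coeff P = 1"
    unfolding P_def by (subst lead_coeff_prod) simp
  with deg_P have lead_P: "coeff P n = 1" by simp
  have P_nodes: "poly P (a q) = 0" if "q < n" for q
    unfolding P_def poly_prod using that by (intro prod_zero) auto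
  have "(\<Sum>q<n. a q) = 0"
  proof -
    have "(\<Sum>q<n. 2 * real q) = real n * (real n - 1)"
      by (induction n) (auto simp: algebra_simps)
    then show ?thesis by (simp add: a_def sum.distrib sum_subtractf algebra_simps)
  qed
  \<comment> \<open>Symmetric nodes make the rule exact on \<open>P\<close>, hence on \<open>x ^ n\<close> as well.\<close>
  then have coeff_P: "coeff P (n - 1) = 0"
    using coeff_prod_linear_factors[of a "n - 1"] n by (simp add: P_def)
  show thesis
  proof
    fix f :: "real poly"
    assume deg_f: "degree f \<le> n"
    define g where "g = f - smult (coeff f n) P"
    have "degree g \<le> n"
      using deg_f deg_P unfolding g_def by (intro degree_diff_le) (auto intro: order.trans[OF degree_smult_le])
    moreover have "coeff g n = 0"
      using lead_P by (simp add: g_def)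
    ultimately have "degree g < n"
      using n by (metis le_neq_implies_less leading_coeff_0_iff not_one_le_zero degree_0)
    then have "coeff g (n - 1) = (\<Sum>q<n. c q * poly g (a q))"
      by (rule lagrange)
    then show "coeff f (n - 1) = (\<Sum>q<n. c q * poly f (a q))"
      using coeff_P by (simp add: g_def P_nodes)
  qed
qed

section \<open>Polarized powers\<close>

text \<open>The symmetrization of \<open>y \<otimes> u^{\<otimes>(d-1)}\<close>, up to the factor \<open>d\<close>.\<close>

definition polar_tensor :: "('a \<Rightarrow> real) \<Rightarrow> ('a \<Rightarrow> real) \<Rightarrow> 'a list \<Rightarrow> real" where
  "polar_tensor u y ks = (\<Sum>j<length ks. y (ks ! j) * prod_list (map u (del_nth j ks)))"

lemma polar_tensor_Cons:
  "polar_tensor u y (z # zs) = y z * prod_list (map u zs) + u z * polar_tensor u y zs"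
  unfolding polar_tensor_def
  by (simp add: sum.lessThan_Suc_shift del_nth_def sum_distrib_left ac_simps del: sum.lessThan_Suc)

lemma coeff_prod_linear_above:
  "length ks < m \<Longrightarrow> coeff (\<Prod>z\<leftarrow>ks. [:y z, u z:]) m = 0"
proof (induction ks arbitrary: m)
  case (Cons z zs)
  then obtain m' where "m = Suc m'" "length zs < m'"
    by (cases m) auto
  then show ?case
    using Cons.IH by simp
qed simp

lemma coeff_prod_linear_length:
  "coeff (\<Prod>z\<leftarrow>ks. [:y z, u z:]) (length ks) = prod_list (map u ks)"
  by (induction ks) (simp_all add: coeff_prod_linear_above)

lemma polar_tensor_eq_coeff:
  "polar_tensor u y (z # zs) = coeff (\<Prod>x\<leftarrow>z # zs. [:y x, u x:]) (length zs)"
proof (induction zs arbitrary: z)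
  case Nil
  then show ?case
    by (simp add: polar_tensor_def del_nth_def)
next
  case (Cons w ws)
  then show ?case
    using coeff_prod_linear_length[of y u "w # ws"]
    by (simp add: polar_tensor_Cons[of u y z] ac_simps)
qed

definition waring_repr :: "nat \<Rightarrow> 'a set \<Rightarrow> ('a list \<Rightarrow> real) \<Rightarrow> nat \<Rightarrow> bool" where
  "waring_repr d A T r \<longleftrightarrow> (\<exists>(lam :: nat \<Rightarrow> real) (v :: nat \<Rightarrow> 'a \<Rightarrow> real).
      \<forall>ks\<in>tdom d A. T ks = (\<Sum>i<r. lam i * prod_list (map (v i) ks)))"

lemma prod_list_map_conv_prod_nth:
  "prod_list (map f ks) = (\<Prod>j<length ks. f (ks ! j))"
  by (induction ks) (simp_all add: prod.lessThan_Suc_shift del: prod.lessThan_Suc)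

lemma srk_le_if_waring_repr:
  assumes "waring_repr d A T r"
  shows "srk d A T \<le> enat r"
proof -
  obtain lam v where "\<forall>ks\<in>tdom d A. T ks = (\<Sum>i<r. lam i * prod_list (map (v i) ks))"
    using assms unfolding waring_repr_def by blast
  then have "\<forall>ks\<in>tdom d A. T ks = (\<Sum>i<r. lam i * (\<Prod>j<d. v i (ks ! j)))"
    by (simp add: prod_list_map_conv_prod_nth tdom_def)
  then show ?thesis
    unfolding srk_def by (intro Inf_lower) blast
qed

lemma waring_repr_if_srk_eq:
  assumes "srk d A T = enat r"
  shows "waring_repr d A T r"
proof -
  let ?R = "{enat r | r. \<exists>(lam :: nat \<Rightarrow> real) (v :: nat \<Rightarrow> 'a \<Rightarrow> real).
      \<forall>ks\<in>tdom d A. T ks = (\<Sum>i<r. lam i * (\<Prod>j<d. v i (ks ! j)))}"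
  have Inf_R: "Inf ?R = enat r"
    using assms by (simp add: srk_def)
  then have "?R \<noteq> {}"
    by (metis Inf_empty top_enat_def enat.distinct(2))
  then obtain k where "k \<in> ?R"
    by blast
  then have "Inf ?R \<in> ?R"
    by (rule wellorder_InfI)
  then obtain lam v where "\<forall>ks\<in>tdom d A. T ks = (\<Sum>i<r. lam i * (\<Prod>j<d. v i (ks ! j)))"
    using Inf_R by auto
  then show ?thesis
    unfolding waring_repr_def by (auto simp: prod_list_map_conv_prod_nth tdom_def)
qed

lemma waring_repr_cong:
  "waring_repr d A T r \<Longrightarrow> (\<And>ks. ks \<in> tdom d A \<Longrightarrow> T' ks = T ks) \<Longrightarrow> waring_repr d A T' r"
  unfolding waring_repr_def by metis

lemma waring_repr_add:
  assumes "waring_repr d A T r" and "waring_repr d A T' r'"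
  shows "waring_repr d A (\<lambda>ks. T ks + T' ks) (r + r')"
proof -
  obtain lam v where T: "\<forall>ks\<in>tdom d A. T ks = (\<Sum>i<r. lam i * prod_list (map (v i) ks))"
    using assms(1) unfolding waring_repr_def by blast
  obtain lam' v' where T': "\<forall>ks\<in>tdom d A. T' ks = (\<Sum>i<r'. lam' i * prod_list (map (v' i) ks))"
    using assms(2) unfolding waring_repr_def by blast
  let ?lam = "\<lambda>i. if i < r then lam i else lam' (i - r)"
  let ?v = "\<lambda>i. if i < r then v i else v' (i - r)"
  have "(\<Sum>i<r + r'. ?lam i * prod_list (map (?v i) ks))
      = (\<Sum>i<r. lam i * prod_list (map (v i) ks)) + (\<Sum>i<r'. lam' i * prod_list (map (v' i) ks))" for ks
    by (induction r') simp_all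
  then show ?thesis
    unfolding waring_repr_def using T T' by (intro exI[of _ ?lam] exI[of _ ?v]) simp
qed

lemma waring_repr_sum:
  "(\<And>t. t < s \<Longrightarrow> waring_repr d A (F t) r) \<Longrightarrow> waring_repr d A (\<lambda>ks. \<Sum>t<s. F t ks) (s * r)"
proof (induction s)
  case 0
  then show ?case
    unfolding waring_repr_def by simp
next
  case (Suc s)
  then have "waring_repr d A (\<lambda>ks. (\<Sum>t<s. F t ks) + F s ks) (s * r + r)"
    by (intro waring_repr_add) auto
  then show ?case
    by (simp add: add.commute)
qed

lemma waring_repr_polar_tensor:
  assumes d: "1 \<le> d"
  shows "waring_repr d A (polar_tensor u y) d"
proof -
  obtain c a :: "nat \<Rightarrow> real"
    where quad: "\<And>f. degree f \<le> d \<Longrightarrow> coeff f (d - 1) = (\<Sum>q<d. c q * poly f (a q))"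
    using coeff_pred_quadrature[OF d] by blast
  have "polar_tensor u y ks = (\<Sum>q<d. c q * prod_list (map (\<lambda>z. a q * u z + y z) ks))"
    if "ks \<in> tdom d A" for ks
  proof -
    obtain z zs where ks: "ks = z # zs" and len: "length zs = d - 1"
      using \<open>ks \<in> tdom d A\<close> d by (cases ks) (auto simp: tdom_def)
    let ?P = "\<Prod>x\<leftarrow>ks. [:y x, u x:]"
    have "degree ?P \<le> d"
      by (intro degree_le allI impI coeff_prod_linear_above) (use len d ks in simp)
    moreover have "poly ?P t = prod_list (map (\<lambda>z. t * u z + y z) ks)" for t
      by (induction ks) (simp_all add: algebra_simps)
    ultimately show ?thesis
      using quad[of ?P] len by (simp add: ks polar_tensor_eq_coeff)
  qed
  then show ?thesis
    unfolding waring_repr_def by (intro exI[of _ c] exI[of _ "\<lambda>q z. a q * u z + y z"]) simp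
qed

lemma prod_list_map_restrict:
  fixes u :: "'a \<Rightarrow> 'b::comm_semiring_1"
  shows "prod_list (map (\<lambda>z. if z \<in> I then u z else 0) ks) = (if set ks \<subseteq> I then prod_list (map u ks) else 0)"
  by (induction ks) auto

lemma waring_repr_restrict:
  assumes "waring_repr d I T r"
  shows "waring_repr d A (\<lambda>ks. if set ks \<subseteq> I then T ks else 0) r"
proof -
  obtain lam v where T: "\<forall>ks\<in>tdom d I. T ks = (\<Sum>i<r. lam i * prod_list (map (v i) ks))"
    using assms unfolding waring_repr_def by blast
  show ?thesis
    unfolding waring_repr_def
    by (intro exI[of _ lam] exI[of _ "\<lambda>i z. if z \<in> I then v i z else 0"])
      (auto simp: prod_list_map_restrict T tdom_def)
qed

section \<open>Deleting an entry, and averaging over rotations\<close>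

lemma length_del_nth: "j < length ks \<Longrightarrow> length (del_nth j ks) = length ks - 1"
  by (simp add: del_nth_def)

lemma mset_del_nth: "j < length ks \<Longrightarrow> mset (del_nth j ks) = mset ks - {#ks ! j#}"
  by (subst (2) id_take_nth_drop[of j ks]) (simp_all add: del_nth_def)

lemma set_eq_insert_del_nth: "j < length ks \<Longrightarrow> set ks = insert (ks ! j) (set (del_nth j ks))"
  by (subst (1) id_take_nth_drop[of j ks]) (auto simp: del_nth_def)

lemma set_del_nth_subset: "set (del_nth j ks) \<subseteq> set ks"
  by (auto simp: del_nth_def dest: in_set_takeD in_set_dropD)

lemma nth_mem_set_del_nth:
  assumes "i < length ks" and "i \<noteq> j"
  shows "ks ! i \<in> set (del_nth j ks)"
proof (cases "i < j")
  case True
  then show ?thesis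
    using assms by (auto simp: del_nth_def in_set_conv_nth intro!: exI[of _ i])
next
  case False
  then show ?thesis
    using assms by (auto simp: del_nth_def in_set_conv_nth intro!: exI[of _ "i - Suc j"])
qed

lemma nth_mem_tdom: "ks \<in> tdom d A \<Longrightarrow> j < d \<Longrightarrow> ks ! j \<in> A"
  by (auto simp: tdom_def)

lemma del_nth_in_tdom: "ks \<in> tdom d A \<Longrightarrow> j < d \<Longrightarrow> del_nth j ks \<in> tdom (d - 1) A"
  using set_del_nth_subset[of j ks] by (auto simp: tdom_def length_del_nth)

lemma mset_rotate: "mset (rotate n xs) = mset xs"
proof (induction n)
  case (Suc n)
  then show ?case by (cases "rotate n xs") (simp_all add: rotate_Suc)
qed simp

lemma tsym_rotate:
  assumes "tsym d A T" and "ks \<in> tdom d A"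
  shows "T (rotate q ks) = T ks"
proof -
  have "rotate q ks \<in> tdom d A"
    using assms(2) by (simp add: tdom_def)
  then show ?thesis
    using assms mset_rotate unfolding tsym_def by blast
qed

lemma prod_list_map_mset_cong:
  fixes f :: "'a \<Rightarrow> 'b::comm_monoid_mult"
  shows "mset l = mset l' \<Longrightarrow> prod_list (map f l) = prod_list (map f l')"
  by (metis mset_map prod_mset_prod_list)

lemma sum_lessThan_rotate:
  fixes g :: "nat \<Rightarrow> 'b::comm_monoid_add"
  assumes "j < d"
  shows "(\<Sum>s<d. g ((j + s) mod d)) = (\<Sum>i<d. g i)"
proof -
  have "inj_on (\<lambda>s. (j + s) mod d) {..<d}"
    using assms by (auto simp: inj_on_def mod_if split: if_splits)
  moreover have "(\<lambda>s. (j + s) mod d) ` {..<d} \<subseteq> {..<d}"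
    using assms by auto
  ultimately have "(\<lambda>s. (j + s) mod d) ` {..<d} = {..<d}"
    by (simp add: endo_inj_surj)
  then show ?thesis
    using sum.reindex[OF \<open>inj_on _ _\<close>, of g] by simp
qed

lemma eq_average_over_rotations:
  fixes f :: "nat \<Rightarrow> 'a \<Rightarrow> 'a list \<Rightarrow> real"
  assumes d: "1 \<le> d" and len: "length ks = d"
    and x: "\<And>s. x = (\<Sum>j<d. f j (rotate s ks ! j) (del_nth j (rotate s ks)))"
    and f_sym: "\<And>j z l l'. mset l = mset l' \<Longrightarrow> f j z l = f j z l'"
  shows "x = (\<Sum>i<d. \<Sum>j<d. f j (ks ! i) (del_nth i ks)) / real d"
proof -
  have x_shift: "x = (\<Sum>j<d. f j (ks ! ((j + s) mod d)) (del_nth ((j + s) mod d) ks))" for s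
  proof -
    have "f j (rotate s ks ! j) (del_nth j (rotate s ks))
        = f j (ks ! ((j + s) mod d)) (del_nth ((j + s) mod d) ks)" if "j < d" for j
    proof -
      have nth: "rotate s ks ! j = ks ! ((j + s) mod d)"
        using that len by (simp add: nth_rotate add.commute)
      have "mset (del_nth j (rotate s ks)) = mset (del_nth ((j + s) mod d) ks)"
        using that d len nth by (simp add: mset_del_nth mset_rotate)
      then show ?thesis
        using nth f_sym by metis
    qed
    then show ?thesis
      using x[of s] by simp
  qed
  have "real d * x = (\<Sum>s<d. \<Sum>j<d. f j (ks ! ((j + s) mod d)) (del_nth ((j + s) mod d) ks))"
    using x_shift by simp
  also have "\<dots> = (\<Sum>j<d. \<Sum>i<d. f j (ks ! i) (del_nth i ks))"
    by (subst sum.swap) (simp add: sum_lessThan_rotate[where g = "\<lambda>i. f _ (ks ! i) (del_nth i ks)"])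
  also have "\<dots> = (\<Sum>i<d. \<Sum>j<d. f j (ks ! i) (del_nth i ks))"
    by (rule sum.swap)
  finally show ?thesis
    using d by (simp add: field_simps)
qed

lemma sum_apply: "(\<Sum>x\<in>A. f x) y = (\<Sum>x\<in>A. f x y)"
  by (induction A rule: infinite_finite_induct) auto

interpretation tv: vector_space "tscale :: real \<Rightarrow> ('a list \<Rightarrow> real) \<Rightarrow> ('a list \<Rightarrow> real)"
  by unfold_locales (auto simp: tscale_def fun_eq_iff algebra_simps)

lemma tspan_finite_basis:
  fixes G :: "('a list \<Rightarrow> real) set"
  assumes "finite G"
  obtains e where "\<And>t. t < tdim G \<Longrightarrow> e t \<in> G"
    and "\<And>g. g \<in> tspan G \<Longrightarrow> \<exists>c. \<forall>ks. g ks = (\<Sum>t<tdim G. c t * e t ks)"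
proof -
  obtain B where "B \<subseteq> G" and "G \<subseteq> tv.span B" and card_B: "card B = tdim G"
    unfolding tdim_def by (rule tv.basis_exists)
  then have fin_B: "finite B"
    using assms finite_subset by blast
  obtain e where e: "bij_betw e {..<tdim G} B"
    using ex_bij_betw_nat_finite[OF fin_B] card_B by (metis atLeast0LessThan)
  show thesis
  proof
    show "e t \<in> G" if "t < tdim G" for t
      using bij_betwE[OF e] that \<open>B \<subseteq> G\<close> by blast
  next
    fix g assume "g \<in> tspan G"
    then have "g \<in> tv.span B"
      unfolding tspan_def using tv.span_minimal[OF \<open>G \<subseteq> tv.span B\<close> tv.subspace_span] by blast
    then obtain c where "g = (\<Sum>v\<in>B. tscale (c v) v)"
      using tv.span_finite[OF fin_B] by auto
    then have "g ks = (\<Sum>t<tdim G. c (e t) * e t ks)" for ks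
      using sum.reindex_bij_betw[OF e, of "\<lambda>v. c v * v ks"]
      by (simp add: tscale_def sum_apply)
    then show "\<exists>c. \<forall>ks. g ks = (\<Sum>t<tdim G. c t * e t ks)"
      by (intro exI[of _ "c \<circ> e"]) simp
  qed
qed

lemma SpanM_power_basis:
  assumes fin: "finite W" and dec: "\<forall>w\<in>W. sym_decomposable (d - 1) I (M w)"
  obtains u :: "nat \<Rightarrow> 'a \<Rightarrow> real"
  where "\<And>g. g \<in> SpanM d I W M \<Longrightarrow>
    \<exists>c. \<forall>ks\<in>tdom (d - 1) I. g ks = (\<Sum>t<tdim (SpanM d I W M). c t * prod_list (map (u t) ks))"
proof -
  define G where "G = (\<lambda>w. trestrict (d - 1) I (M w)) ` W"
  have span: "SpanM d I W M = tspan G" and dim: "tdim (SpanM d I W M) = tdim G"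
    by (simp_all add: SpanM_def G_def tspan_def tdim_def tv.dim_span)
  obtain e where eG: "\<And>t. t < tdim G \<Longrightarrow> e t \<in> G"
    and repr: "\<And>g. g \<in> tspan G \<Longrightarrow> \<exists>c. \<forall>ks. g ks = (\<Sum>t<tdim G. c t * e t ks)"
    using tspan_finite_basis[of G] fin unfolding G_def by blast
  have "\<exists>lam v. \<forall>ks\<in>tdom (d - 1) I. e t ks = lam * prod_list (map v ks)" if t: "t < tdim G" for t
  proof -
    obtain w where "w \<in> W" and et: "e t = trestrict (d - 1) I (M w)"
      using eG[OF t] unfolding G_def by blast
    then obtain lam v where "\<forall>ks\<in>tdom (d - 1) I. M w ks = lam * (\<Prod>j<d - 1. v (ks ! j))"
      using dec unfolding sym_decomposable_def by blast
    then show ?thesis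
      by (auto simp: et trestrict_def prod_list_map_conv_prod_nth tdom_def)
  qed
  then obtain lam u
    where e_power: "\<And>t ks. t < tdim G \<Longrightarrow> ks \<in> tdom (d - 1) I \<Longrightarrow> e t ks = lam t * prod_list (map (u t) ks)"
    by metis
  show thesis
  proof
    fix g assume "g \<in> SpanM d I W M"
    then obtain c where "\<forall>ks. g ks = (\<Sum>t<tdim G. c t * e t ks)"
      using repr span by blast
    then have "\<forall>ks\<in>tdom (d - 1) I. g ks = (\<Sum>t<tdim G. (c t * lam t) * prod_list (map (u t) ks))"
      by (simp add: e_power mult.assoc)
    then show "\<exists>c. \<forall>ks\<in>tdom (d - 1) I. g ks = (\<Sum>t<tdim (SpanM d I W M). c t * prod_list (map (u t) ks))"
      unfolding dim by (intro exI[of _ "\<lambda>t. c t * lam t"])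
  qed
qed

section \<open>Symmetric adjoining\<close>

lemma Cmod_eq_add_sum_polar_tensor:
  fixes u :: "nat \<Rightarrow> 'a \<Rightarrow> real"
  assumes d: "1 \<le> d" and C_sym: "tsym d I C"
    and T: "T \<in> Cmod d I W C M" and T_sym: "tsym d I T"
    and basis: "\<And>g. g \<in> SpanM d I W M \<Longrightarrow>
      \<exists>c. \<forall>ks\<in>tdom (d - 1) I. g ks = (\<Sum>t<s. c t * prod_list (map (u t) ks))"
  obtains b where "\<And>ks. ks \<in> tdom d I \<Longrightarrow> T ks = C ks + (\<Sum>t<s. polar_tensor (u t) (b t) ks)"
proof -
  obtain Mf where Mf: "\<forall>j<d. \<forall>k\<in>I. Mf j k \<in> SpanM d I W M"
    and T_eq: "\<forall>ks\<in>tdom d I. T ks = C ks + (\<Sum>j<d. Mf j (ks ! j) (del_nth j ks))"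
    using T unfolding Cmod_def by blast
  have "\<exists>c. \<forall>l\<in>tdom (d - 1) I. Mf j k l = (\<Sum>t<s. c t * prod_list (map (u t) l))"
    if "j < d" "k \<in> I" for j k
    using basis Mf that by blast
  then obtain A where A: "\<And>j k l. j < d \<Longrightarrow> k \<in> I \<Longrightarrow> l \<in> tdom (d - 1) I \<Longrightarrow>
      Mf j k l = (\<Sum>t<s. A j k t * prod_list (map (u t) l))"
    by metis
  define f where "f j k l = (\<Sum>t<s. A j k t * prod_list (map (u t) l))" for j k l
  define b where "b t k = (\<Sum>j<d. A j k t) / real d" for t k
  show thesis
  proof
    fix ks assume ks: "ks \<in> tdom d I"
    then have len: "length ks = d" and rot: "rotate q ks \<in> tdom d I" for q
      by (simp_all add: tdom_def)
    have "T ks - C ks = (\<Sum>j<d. f j (rotate q ks ! j) (del_nth j (rotate q ks)))" for q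
    proof -
      have "T ks - C ks = T (rotate q ks) - C (rotate q ks)"
        using T_sym C_sym ks by (simp add: tsym_rotate)
      also have "\<dots> = (\<Sum>j<d. Mf j (rotate q ks ! j) (del_nth j (rotate q ks)))"
        using T_eq rot by simp
      also have "\<dots> = (\<Sum>j<d. f j (rotate q ks ! j) (del_nth j (rotate q ks)))"
      proof (rule sum.cong[OF refl])
        fix j assume "j \<in> {..<d}"
        then show "Mf j (rotate q ks ! j) (del_nth j (rotate q ks)) = f j (rotate q ks ! j) (del_nth j (rotate q ks))"
          using A nth_mem_tdom[OF rot] del_nth_in_tdom[OF rot] by (simp add: f_def)
      qed
      finally show ?thesis .
    qed
    moreover have "f j k l = f j k l'" if "mset l = mset l'" for j k l l'
      unfolding f_def by (simp add: prod_list_map_mset_cong[OF that])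
    ultimately have "T ks - C ks = (\<Sum>i<d. \<Sum>j<d. f j (ks ! i) (del_nth i ks)) / real d"
      by (rule eq_average_over_rotations[OF d len])
    also have "\<dots> = (\<Sum>i<d. \<Sum>j<d. \<Sum>t<s. A j (ks ! i) t * prod_list (map (u t) (del_nth i ks)) / real d)"
      by (simp add: f_def sum_divide_distrib)
    also have "\<dots> = (\<Sum>t<s. \<Sum>i<d. \<Sum>j<d. A j (ks ! i) t * prod_list (map (u t) (del_nth i ks)) / real d)"
      by (simp only: sum.swap[where A = "{..<s}" and B = "{..<d}"])
    also have "\<dots> = (\<Sum>t<s. polar_tensor (u t) (b t) ks)"
      by (simp add: polar_tensor_def b_def len sum_divide_distrib sum_distrib_right)
    finally show "T ks = C ks + (\<Sum>t<s. polar_tensor (u t) (b t) ks)"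
      by simp
  qed
qed

lemma nth_mem_if_del_nth_subset:
  assumes "ks \<in> tdom d (I \<union> W)" and "\<not> set ks \<subseteq> I" and "j < d" and "set (del_nth j ks) \<subseteq> I"
  shows "ks ! j \<in> W"
proof -
  have "length ks = d"
    using assms(1) by (simp add: tdom_def)
  then have "ks ! j \<notin> I"
    using assms(2-4) set_eq_insert_del_nth[of j ks] by auto
  then show ?thesis
    using nth_mem_tdom[OF assms(1,3)] by blast
qed

lemma SAdj_eq_sum_if_not_subset:
  assumes disj: "I \<inter> W = {}" and ks: "ks \<in> tdom d (I \<union> W)" and not_I: "\<not> set ks \<subseteq> I"
  shows "SAdj d I W C M ks = (\<Sum>j<d. if set (del_nth j ks) \<subseteq> I then M (ks ! j) (del_nth j ks) else 0)"
proof -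
  have len: "length ks = d"
    using ks by (simp add: tdom_def)
  have W: "ks ! j \<in> W" if "j < d" and "set (del_nth j ks) \<subseteq> I" for j
    using nth_mem_if_del_nth_subset[OF ks not_I that] .
  have unique: "j = j'"
    if "j < d" "j' < d" "set (del_nth j ks) \<subseteq> I" "set (del_nth j' ks) \<subseteq> I" for j j'
  proof (rule ccontr)
    assume "j \<noteq> j'"
    then have "ks ! j \<in> I"
      using that nth_mem_set_del_nth[of j ks j'] len by auto
    then show False
      using W[OF that(1,3)] disj by blast
  qed
  show ?thesis
  proof (cases "\<exists>j<d. set (del_nth j ks) \<subseteq> I")
    case True
    then obtain j where j: "j < d" "set (del_nth j ks) \<subseteq> I"
      by blast
    have "(THE j. j < length ks \<and> ks ! j \<in> W \<and> set (del_nth j ks) \<subseteq> I) = j"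
      using j W unique len by (intro the_equality) auto
    then have "SAdj d I W C M ks = M (ks ! j) (del_nth j ks)"
      using not_I j W len by (auto simp: SAdj_def Let_def)
    moreover have "(\<Sum>j'<d. if set (del_nth j' ks) \<subseteq> I then M (ks ! j') (del_nth j' ks) else 0)
        = (\<Sum>j'<d. if j' = j then M (ks ! j) (del_nth j ks) else 0)"
      using unique j by (intro sum.cong refl) auto
    ultimately show ?thesis
      using j by simp
  next
    case False
    then show ?thesis
      using not_I len by (auto simp: SAdj_def)
  qed
qed

lemma SAdj_eq_restrict_add_sum_polar_tensor:
  fixes u b :: "nat \<Rightarrow> 'a \<Rightarrow> real" and cw :: "'a \<Rightarrow> nat \<Rightarrow> real"
  assumes disj: "I \<inter> W = {}"
    and T: "\<And>ks. ks \<in> tdom d I \<Longrightarrow> T ks = C ks + (\<Sum>t<s. polar_tensor (u t) (b t) ks)"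
    and M: "\<And>w l. w \<in> W \<Longrightarrow> l \<in> tdom (d - 1) I \<Longrightarrow> M w l = (\<Sum>t<s. cw w t * prod_list (map (u t) l))"
    and ks: "ks \<in> tdom d (I \<union> W)"
  shows "SAdj d I W C M ks = (if set ks \<subseteq> I then T ks else 0)
    + (\<Sum>t<s. polar_tensor (\<lambda>z. if z \<in> I then u t z else 0) (\<lambda>z. if z \<in> W then cw z t else - b t z) ks)"
    (is "_ = _ + (\<Sum>t<s. ?P t)")
proof -
  have len: "length ks = d"
    using ks by (simp add: tdom_def)
  have P_eq: "?P t = (\<Sum>j<d. if set (del_nth j ks) \<subseteq> I
      then (if ks ! j \<in> W then cw (ks ! j) t else - b t (ks ! j)) * prod_list (map (u t) (del_nth j ks))
      else 0)" for t
    by (auto simp: polar_tensor_def prod_list_map_restrict len intro!: sum.cong)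
  show ?thesis
  proof (cases "set ks \<subseteq> I")
    case True
    then have ksI: "ks \<in> tdom d I"
      using len by (simp add: tdom_def)
    have "?P t = - polar_tensor (u t) (b t) ks" for t
    proof -
      have "ks ! j \<notin> W" "set (del_nth j ks) \<subseteq> I" if "j < d" for j
        using True disj nth_mem_tdom[OF ksI that] set_del_nth_subset[of j ks] by auto
      then show ?thesis
        unfolding P_eq by (simp add: polar_tensor_def len sum_negf[symmetric])
    qed
    then show ?thesis
      using True T[OF ksI] by (simp add: SAdj_def sum_negf)
  next
    case False
    have "(\<Sum>t<s. ?P t)
        = (\<Sum>j<d. \<Sum>t<s. if set (del_nth j ks) \<subseteq> I then cw (ks ! j) t * prod_list (map (u t) (del_nth j ks)) else 0)"
      unfolding P_eq using nth_mem_if_del_nth_subset[OF ks False]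
      by (subst sum.swap) (intro sum.cong refl, auto)
    also have "\<dots> = (\<Sum>j<d. if set (del_nth j ks) \<subseteq> I then M (ks ! j) (del_nth j ks) else 0)"
      using nth_mem_if_del_nth_subset[OF ks False] del_nth_in_tdom[OF ks] len
      by (intro sum.cong refl) (auto simp: M tdom_def length_del_nth)
    finally show ?thesis
      using SAdj_eq_sum_if_not_subset[OF disj ks False] False by simp
  qed
qed

lemma waring_repr_SAdj:
  assumes d: "1 \<le> d" and fin: "finite W" and disj: "I \<inter> W = {}"
    and dec: "\<forall>w\<in>W. sym_decomposable (d - 1) I (M w)"
    and C_sym: "tsym d I C" and T: "T \<in> Cmod d I W C M" and T_sym: "tsym d I T"
    and T_repr: "waring_repr d I T r"
  shows "waring_repr d (I \<union> W) (SAdj d I W C M) (r + d * tdim (SpanM d I W M))"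
proof -
  define s where "s = tdim (SpanM d I W M)"
  obtain u where basis: "\<And>g. g \<in> SpanM d I W M \<Longrightarrow>
      \<exists>c. \<forall>ks\<in>tdom (d - 1) I. g ks = (\<Sum>t<s. c t * prod_list (map (u t) ks))"
    using SpanM_power_basis[OF fin dec] unfolding s_def by blast
  obtain b where T_eq: "\<And>ks. ks \<in> tdom d I \<Longrightarrow> T ks = C ks + (\<Sum>t<s. polar_tensor (u t) (b t) ks)"
    using Cmod_eq_add_sum_polar_tensor[OF d C_sym T T_sym basis] by blast
  have "\<exists>c. \<forall>l\<in>tdom (d - 1) I. M w l = (\<Sum>t<s. c t * prod_list (map (u t) l))" if "w \<in> W" for w
  proof -
    have "trestrict (d - 1) I (M w) \<in> SpanM d I W M"
      unfolding SpanM_def tspan_def using that by (intro tv.span_base) blast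
    then show ?thesis
      using basis by (fastforce simp: trestrict_def)
  qed
  then obtain cw where M_eq: "\<And>w l. w \<in> W \<Longrightarrow> l \<in> tdom (d - 1) I \<Longrightarrow>
      M w l = (\<Sum>t<s. cw w t * prod_list (map (u t) l))"
    by metis
  \<comment> \<open>On \<open>I\<close> the weight \<open>- b t\<close> turns \<open>T\<close> back into \<open>C\<close>; on \<open>W\<close> it carries the coordinates of \<open>M w\<close>.\<close>
  have "waring_repr d (I \<union> W) (\<lambda>ks. (if set ks \<subseteq> I then T ks else 0) + (\<Sum>t<s.
      polar_tensor (\<lambda>z. if z \<in> I then u t z else 0) (\<lambda>z. if z \<in> W then cw z t else - b t z) ks)) (r + s * d)"
    by (intro waring_repr_add waring_repr_restrict T_repr waring_repr_sum waring_repr_polar_tensor d)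
  then show ?thesis
    unfolding s_def[symmetric] mult.commute[of d s]
    by (rule waring_repr_cong) (rule SAdj_eq_restrict_add_sum_polar_tensor[OF disj T_eq M_eq])
qed

lemma srk_SAdj_le:
  assumes "1 \<le> d" and "finite W" and "I \<inter> W = {}"
    and "\<forall>w\<in>W. sym_decomposable (d - 1) I (M w)"
    and "tsym d I C" and "T \<in> Cmod d I W C M" and "tsym d I T"
  shows "srk d (I \<union> W) (SAdj d I W C M) \<le> srk d I T + enat (d * tdim (SpanM d I W M))"
proof (cases "srk d I T")
  case (enat r)
  then have "waring_repr d (I \<union> W) (SAdj d I W C M) (r + d * tdim (SpanM d I W M))"
    using assms by (intro waring_repr_SAdj waring_repr_if_srk_eq)
  then show ?thesis
    using enat by (simp add: srk_le_if_waring_repr)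
qed simp

theorem proposition3p15:
  fixes d :: nat and I W :: "'a set"
    and C :: "'a list \<Rightarrow> real" and M :: "'a \<Rightarrow> 'a list \<Rightarrow> real"
  assumes "1 \<le> d"
    and "finite I" and "finite W" and "I \<inter> W = {}"
    and "tsym d I C"
    and "\<forall>w\<in>W. sym_decomposable (d - 1) I (M w)"
    and "\<forall>w1\<in>W. \<forall>w2\<in>W. (\<forall>ks\<in>tdom (d - 1) I. M w1 ks = M w2 ks) \<longrightarrow> w1 = w2"
  shows "srk d (I \<union> W) (SAdj d I W C M)
           \<le> minsrk d I (Cmod d I W C M) + enat (d * tdim (SpanM d I W M))"
proof -
  let ?S = "{srk d I T | T. T \<in> Cmod d I W C M \<and> tsym d I T}"
  show ?thesis
  proof (cases "?S = {}")
    case True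
    then show ?thesis
      unfolding minsrk_def True by (simp add: top_enat_def)
  next
    case False
    then obtain x where "x \<in> ?S"
      by blast
    then have "Inf ?S \<in> ?S"
      by (rule wellorder_InfI)
    then obtain T where T: "T \<in> Cmod d I W C M" "tsym d I T"
      and min: "minsrk d I (Cmod d I W C M) = srk d I T"
      unfolding minsrk_def by auto
    show ?thesis
      unfolding min by (rule srk_SAdj_le[OF assms(1,3,4,6,5) T])
  qed
qed

end
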